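(* Let $H_0,H_1$ be complex Hilbert spaces, $G$ a densely defined closed operator from $H_0$ into $H_1$ and $D$ a densely defined closed operator from $H_1$ into $H_0$ with $-G^*\subset D$. Let $a\in\mathcal L(H_1)$ and $m\in\mathcal L(H_0)$ be coercive and let $u_0\in\mathrm{BD}(G)$. Then there exists a unique $u\in\mathrm{dom}(DaG)$ such that $mu-DaGu=0$ and $u-u_0\in\mathrm{dom}(\mathring G)$.
   Context: $\mathring G=-D^*$, $\mathring D=-G^*$. Domains carry graph inner products, e.g. $(u,v)_{\mathrm{dom}(G)}=(u,v)_{H_0}+(Gu,Gv)_{H_1}$. $\mathrm{BD}(G)$ is the orthogonal complement of $\mathrm{dom}(\mathring G)$ in $\mathrm{dom}(G)$. $\mathrm{dom}(DaG)=\{u\in\mathrm{dom}(G):aGu\in\mathrm{dom}(D)\}$. A bounded operator $M$ is coercive if $\mathrm{Re}(Mx,x)\ge\mu\|x\|^2$ for some $\mu>0$ and all $x$. *)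

theory Defs
  imports "HOL-Analysis.Analysis"
begin

class complex_inner = real_normed_vector +
  fixes scaleC :: "complex \<Rightarrow> 'a \<Rightarrow> 'a" (infixr "*\<^sub>C" 75)
    and cinner :: "'a \<Rightarrow> 'a \<Rightarrow> complex"
  assumes scaleC_add_right: "c *\<^sub>C (x + y) = c *\<^sub>C x + c *\<^sub>C y"
    and scaleC_add_left: "(b + c) *\<^sub>C x = b *\<^sub>C x + c *\<^sub>C x"
    and scaleC_scaleC: "b *\<^sub>C (c *\<^sub>C x) = (b * c) *\<^sub>C x"
    and scaleC_one: "1 *\<^sub>C x = x"
    and scaleR_scaleC: "scaleR r x = complex_of_real r *\<^sub>C x"
    and cinner_commute: "cinner x y = cnj (cinner y x)"
    and cinner_add_left: "cinner (x + y) z = cinner x z + cinner y z"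
    and cinner_scaleC_left: "cinner (c *\<^sub>C x) y = cnj c * cinner x y"
    and cinner_Re_nonneg: "0 \<le> Re (cinner x x)"
    and norm_eq_sqrt_cinner: "norm x = sqrt (Re (cinner x x))"

class chilbert_space = complex_inner + complete_space

section \<open>(Unbounded) linear operators, given by a domain and a map\<close>

definition csubspace :: "'a::complex_inner set \<Rightarrow> bool" where
  "csubspace S \<longleftrightarrow> 0 \<in> S \<and> (\<forall>x\<in>S. \<forall>y\<in>S. x + y \<in> S) \<and> (\<forall>c. \<forall>x\<in>S. c *\<^sub>C x \<in> S)"

definition clinear_on :: "'a::complex_inner set \<Rightarrow> ('a \<Rightarrow> 'b::complex_inner) \<Rightarrow> bool" where
  "clinear_on S f \<longleftrightarrow> (\<forall>x\<in>S. \<forall>y\<in>S. f (x + y) = f x + f y) \<and> (\<forall>c. \<forall>x\<in>S. f (c *\<^sub>C x) = c *\<^sub>C f x)"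

definition densely_defined_closed :: "'a::complex_inner set \<Rightarrow> ('a \<Rightarrow> 'b::complex_inner) \<Rightarrow> bool" where
  "densely_defined_closed S f \<longleftrightarrow> csubspace S \<and> clinear_on S f \<and> closure S = UNIV
     \<and> closed {(x, f x) | x. x \<in> S}"

definition adj_dom :: "'a::complex_inner set \<Rightarrow> ('a \<Rightarrow> 'b::complex_inner) \<Rightarrow> 'b set" where
  "adj_dom S f = {v. \<exists>w. \<forall>u\<in>S. cinner (f u) v = cinner u w}"

definition adj :: "'a::complex_inner set \<Rightarrow> ('a \<Rightarrow> 'b::complex_inner) \<Rightarrow> 'b \<Rightarrow> 'a" where
  "adj S f v = (THE w. \<forall>u\<in>S. cinner (f u) v = cinner u w)"

definition neg_adj_subset :: "'a::complex_inner set \<Rightarrow> ('a \<Rightarrow> 'b::complex_inner) \<Rightarrow> 'b set \<Rightarrow> ('b \<Rightarrow> 'a) \<Rightarrow> bool" where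
  "neg_adj_subset SG G SD D \<longleftrightarrow> adj_dom SG G \<subseteq> SD \<and> (\<forall>v\<in>adj_dom SG G. D v = - adj SG G v)"

text \<open>\<open>dom(G\<^sup>\<circ>)\<close> where \<open>G\<^sup>\<circ> = -D\<^sup>*\<close>: it is the domain of \<open>D\<^sup>*\<close>.\<close>
definition dom_ring :: "'b::complex_inner set \<Rightarrow> ('b \<Rightarrow> 'a::complex_inner) \<Rightarrow> 'a set" where
  "dom_ring SD D = adj_dom SD D"

text \<open>\<open>BD(G)\<close>: orthogonal complement of \<open>dom(G\<^sup>\<circ>)\<close> in \<open>dom(G)\<close> w.r.t. the graph inner product
  \<open>(u,v)_{dom G} = (u,v) + (Gu,Gv)\<close>.\<close>
definition BD :: "'a::complex_inner set \<Rightarrow> ('a \<Rightarrow> 'b::complex_inner) \<Rightarrow> 'b set \<Rightarrow> ('b \<Rightarrow> 'a) \<Rightarrow> 'a set" where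
  "BD SG G SD D = {u \<in> SG. \<forall>v\<in>dom_ring SD D. cinner v u + cinner (G v) (G u) = 0}"

definition dom_DaG :: "'a::complex_inner set \<Rightarrow> ('a \<Rightarrow> 'b::complex_inner) \<Rightarrow> ('b \<Rightarrow> 'b) \<Rightarrow> 'b set \<Rightarrow> 'a set" where
  "dom_DaG SG G a SD = {u \<in> SG. a (G u) \<in> SD}"

definition bounded_clinear :: "('a::complex_inner \<Rightarrow> 'b::complex_inner) \<Rightarrow> bool" where
  "bounded_clinear f \<longleftrightarrow> bounded_linear f \<and> (\<forall>c x. f (c *\<^sub>C x) = c *\<^sub>C f x)"

definition coercive :: "('a::complex_inner \<Rightarrow> 'a) \<Rightarrow> bool" where
  "coercive M \<longleftrightarrow> (\<exists>\<mu>>0. \<forall>x. Re (cinner (M x) x) \<ge> \<mu> * (norm x)\<^sup>2)"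

end

theory Submission
  imports Defs
begin

text \<open>Let \<open>\<Gamma>\<close> be the graph of \<open>G\<^sup>\<circ> = -D\<^sup>*\<close>, a closed subspace of \<open>H\<^sub>0 \<times> H\<^sub>1\<close>; the
  hypothesis \<open>-G\<^sup>* \<subseteq> D\<close> gives \<open>G\<^sup>\<circ> \<subseteq> G\<close>. The operator \<open>M = m \<oplus> a\<close> is coercive on
  \<open>H\<^sub>0 \<times> H\<^sub>1\<close>, so a Lax--Milgram argument on \<open>\<Gamma>\<close> gives \<open>(w, G w) \<in> \<Gamma>\<close> with
  \<open>M (u, G u) \<perp> \<Gamma>\<close> for \<open>u = u\<^sub>0 + w\<close>. This orthogonality reads \<open>(D\<^sup>* z, a G u) = (z, m u)\<close>
  for all \<open>z \<in> dom D\<^sup>*\<close>, i.e. \<open>a G u \<in> dom D\<^sup>*\<^sup>* = dom D\<close> and \<open>D a G u = m u\<close>. The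
  difference \<open>z\<close> of two solutions satisfies \<open>Re (m z, z) = - Re (a G z, G z) \<le> 0\<close>, so \<open>z = 0\<close>.\<close>

section \<open>Complex inner product spaces\<close>

lemma scaleC_zero_left [simp]: "0 *\<^sub>C (x::'a::complex_inner) = 0"
  using scaleC_add_left[of 0 0 x] by simp

lemma scaleC_minus1_left: "(-1) *\<^sub>C (x::'a::complex_inner) = - x"
  using scaleR_scaleC[of "-1" x] by simp

lemma cinner_add_right: "cinner (x::'a::complex_inner) (y + z) = cinner x y + cinner x z"
  by (metis cinner_add_left cinner_commute complex_cnj_add)

lemma cinner_scaleC_right: "cinner (x::'a::complex_inner) (c *\<^sub>C y) = c * cinner x y"
  by (metis cinner_commute cinner_scaleC_left complex_cnj_cnj complex_cnj_mult)

lemma cinner_zero_left [simp]: "cinner (0::'a::complex_inner) y = 0"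
  using cinner_add_left[of "0::'a" 0 y] by simp

lemma cinner_zero_right [simp]: "cinner (x::'a::complex_inner) 0 = 0"
  using cinner_add_right[of x "0::'a" 0] by simp

lemma cinner_minus_left: "cinner (- x::'a::complex_inner) y = - cinner x y"
  using cinner_add_left[of x "-x" y] by (simp add: add_eq_0_iff)

lemma cinner_minus_right: "cinner (x::'a::complex_inner) (- y) = - cinner x y"
  using cinner_add_right[of x y "-y"] by (simp add: add_eq_0_iff)

lemma cinner_diff_left: "cinner (x - z::'a::complex_inner) y = cinner x y - cinner z y"
  using cinner_add_left[of x "-z" y] by (simp add: cinner_minus_left)

lemma cinner_diff_right: "cinner (x::'a::complex_inner) (y - z) = cinner x y - cinner x z"
  using cinner_add_right[of x y "-z"] by (simp add: cinner_minus_right)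

lemma cinner_scaleR_left: "cinner (r *\<^sub>R x::'a::complex_inner) y = of_real r * cinner x y"
  by (simp add: scaleR_scaleC cinner_scaleC_left)

lemma cinner_scaleR_right: "cinner (x::'a::complex_inner) (r *\<^sub>R y) = of_real r * cinner x y"
  by (simp add: scaleR_scaleC cinner_scaleC_right)

lemma Re_cinner_self: "Re (cinner (x::'a::complex_inner) x) = (norm x)\<^sup>2"
  using norm_eq_sqrt_cinner[of x] cinner_Re_nonneg[of x] by simp

lemma Im_cinner_self: "Im (cinner (x::'a::complex_inner) x) = 0"
  using arg_cong[OF cinner_commute[of x x], of Im] by simp

lemma cinner_self: "cinner (x::'a::complex_inner) x = of_real ((norm x)\<^sup>2)"
  using Re_cinner_self[of x] Im_cinner_self[of x] by (simp add: complex_eq_iff)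

lemma cinner_self_eq_0 [simp]: "cinner (x::'a::complex_inner) x = 0 \<longleftrightarrow> x = 0"
  by (simp add: cinner_self)

lemma cinner_eq_0_commute: "cinner (x::'a::complex_inner) y = 0 \<longleftrightarrow> cinner y x = 0"
  by (metis cinner_commute complex_cnj_zero_iff)

lemma Re_cinner_commute: "Re (cinner (y::'a::complex_inner) x) = Re (cinner x y)"
  by (subst cinner_commute) simp

lemma norm_diff_power2:
  "(norm (x - y))\<^sup>2 = (norm (x::'a::complex_inner))\<^sup>2 + (norm y)\<^sup>2 - 2 * Re (cinner x y)"
  by (simp add: Re_cinner_self[symmetric] cinner_diff_left cinner_diff_right Re_cinner_commute[of y x])

lemma Re_cinner_le_norm_mult: "Re (cinner (x::'a::complex_inner) y) \<le> norm x * norm y"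
proof (cases "x = 0 \<or> y = 0")
  case True
  then show ?thesis by auto
next
  case False
  then have nx: "norm x > 0" and ny: "norm y > 0" by auto
  define x' y' where "x' = (1 / norm x) *\<^sub>R x" and "y' = (1 / norm y) *\<^sub>R y"
  have "0 \<le> (norm (x' - y'))\<^sup>2" by simp
  then have "Re (cinner x' y') \<le> 1"
    using nx ny by (simp add: norm_diff_power2 x'_def y'_def)
  moreover have "Re (cinner x' y') = Re (cinner x y) / (norm x * norm y)"
    by (simp add: x'_def y'_def cinner_scaleR_left cinner_scaleR_right)
  ultimately show ?thesis
    using nx ny by (simp add: divide_le_eq)
qed

lemma norm_scaleC: "norm (c *\<^sub>C (x::'a::complex_inner)) = cmod c * norm x"
proof -
  have "(norm (c *\<^sub>C x))\<^sup>2 = Re (cnj c * c * cinner x x)"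
    by (simp only: Re_cinner_self[symmetric] cinner_scaleC_left cinner_scaleC_right mult.assoc mult.left_commute)
  also have "cnj c * c * cinner x x = of_real ((cmod c)\<^sup>2 * (norm x)\<^sup>2)"
  proof -
    have "cnj c * c = of_real ((cmod c)\<^sup>2)" using complex_norm_square[of c] by (simp add: mult.commute)
    then show ?thesis by (simp only: cinner_self of_real_mult)
  qed
  finally have "(norm (c *\<^sub>C x))\<^sup>2 = (cmod c * norm x)\<^sup>2"
    by (simp add: power_mult_distrib)
  then show ?thesis by (simp add: power2_eq_iff_nonneg)
qed

text \<open>Cauchy--Schwarz: rotate \<open>y\<close> by the phase of \<open>cinner x y\<close> to make the inner product real.\<close>
lemma norm_cinner_le: "cmod (cinner (x::'a::complex_inner) y) \<le> norm x * norm y"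
proof (cases "cinner x y = 0")
  case True
  then show ?thesis by simp
next
  case False
  define B where "B = cinner x y"
  define c where "c = cnj B / cmod B"
  have "cnj B * B = of_real (cmod B) * of_real (cmod B)"
    by (metis complex_norm_square mult.commute of_real_mult power2_eq_square)
  then have "c * B = of_real (cmod B)"
    using False unfolding c_def B_def[symmetric] by (simp add: field_simps)
  then have "cmod B = Re (cinner x (c *\<^sub>C y))"
    by (simp add: cinner_scaleC_right B_def)
  also have "\<dots> \<le> norm x * norm y"
    using Re_cinner_le_norm_mult[of x "c *\<^sub>C y"] False
    by (simp add: norm_scaleC c_def norm_divide B_def)
  finally show ?thesis by (simp add: B_def)
qed

lemma bounded_bilinear_cinner: "bounded_bilinear (cinner :: 'a::complex_inner \<Rightarrow> 'a \<Rightarrow> complex)"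
proof
  fix a a' b :: 'a and r :: real
  show "cinner (a + a') b = cinner a b + cinner a' b" by (rule cinner_add_left)
  show "cinner b (a + a') = cinner b a + cinner b a'" by (rule cinner_add_right)
  show "cinner (r *\<^sub>R a) b = r *\<^sub>R cinner a b" by (simp add: cinner_scaleR_left scaleR_conv_of_real)
  show "cinner b (r *\<^sub>R a) = r *\<^sub>R cinner b a" by (simp add: cinner_scaleR_right scaleR_conv_of_real)
  show "\<exists>K. \<forall>a b::'a. norm (cinner a b) \<le> norm a * norm b * K"
    using norm_cinner_le by (intro exI[of _ 1]) auto
qed

lemmas continuous_on_cinner [continuous_intros] =
  bounded_bilinear.continuous_on[OF bounded_bilinear_cinner]

instantiation prod :: (complex_inner, complex_inner) complex_inner
begin

definition scaleC_prod_def: "c *\<^sub>C x = (c *\<^sub>C fst x, c *\<^sub>C snd x)"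

definition cinner_prod_def: "cinner x y = cinner (fst x) (fst y) + cinner (snd x) (snd y)"

instance
proof
  fix x y z :: "'a \<times> 'b" and b c :: complex and r :: real
  show "c *\<^sub>C (x + y) = c *\<^sub>C x + c *\<^sub>C y" by (simp add: scaleC_prod_def scaleC_add_right)
  show "(b + c) *\<^sub>C x = b *\<^sub>C x + c *\<^sub>C x" by (simp add: scaleC_prod_def scaleC_add_left)
  show "b *\<^sub>C (c *\<^sub>C x) = (b * c) *\<^sub>C x" by (simp add: scaleC_prod_def scaleC_scaleC)
  show "1 *\<^sub>C x = x" by (simp add: scaleC_prod_def scaleC_one)
  show "r *\<^sub>R x = complex_of_real r *\<^sub>C x" by (simp add: scaleC_prod_def scaleR_prod_def scaleR_scaleC)
  show "cinner x y = cnj (cinner y x)"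
    by (simp add: cinner_prod_def cinner_commute[of "fst x"] cinner_commute[of "snd x"])
  show "cinner (x + y) z = cinner x z + cinner y z" by (simp add: cinner_prod_def cinner_add_left)
  show "cinner (c *\<^sub>C x) y = cnj c * cinner x y"
    by (simp add: cinner_prod_def scaleC_prod_def cinner_scaleC_left distrib_left)
  show "0 \<le> Re (cinner x x)" by (simp add: cinner_prod_def cinner_Re_nonneg)
  show "norm x = sqrt (Re (cinner x x))" by (simp add: cinner_prod_def norm_prod_def Re_cinner_self)
qed

end

instance prod :: (chilbert_space, chilbert_space) chilbert_space ..

lemma cinner_Pair [simp]: "cinner (a, b) (c, d) = cinner a c + cinner b d"
  by (simp add: cinner_prod_def)

lemma scaleC_Pair [simp]: "c *\<^sub>C (a, b) = (c *\<^sub>C a, c *\<^sub>C b)"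
  by (simp add: scaleC_prod_def)

section \<open>Orthogonal projection onto closed subspaces\<close>

lemma csubspace_zero: "csubspace C \<Longrightarrow> 0 \<in> C"
  unfolding csubspace_def by blast

lemma csubspace_add: "csubspace C \<Longrightarrow> x \<in> C \<Longrightarrow> y \<in> C \<Longrightarrow> x + y \<in> C"
  unfolding csubspace_def by blast

lemma csubspace_scaleC: "csubspace C \<Longrightarrow> x \<in> C \<Longrightarrow> c *\<^sub>C x \<in> C"
  unfolding csubspace_def by blast

lemma csubspace_scaleR: "csubspace C \<Longrightarrow> x \<in> C \<Longrightarrow> r *\<^sub>R x \<in> C"
  by (simp add: scaleR_scaleC csubspace_scaleC)

lemma csubspace_minus: "csubspace C \<Longrightarrow> x \<in> C \<Longrightarrow> - x \<in> C"
  by (metis csubspace_scaleC scaleC_minus1_left)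

lemma csubspace_diff: "csubspace C \<Longrightarrow> x \<in> C \<Longrightarrow> y \<in> C \<Longrightarrow> x - y \<in> C"
  using csubspace_add[of C x "- y"] csubspace_minus[of C y] by simp

definition corthogonal_comp :: "'a::complex_inner set \<Rightarrow> 'a set" where
  "corthogonal_comp S = {k. \<forall>x\<in>S. cinner x k = 0}"

lemma csubspace_corthogonal_comp: "csubspace (corthogonal_comp S)"
  unfolding csubspace_def corthogonal_comp_def by (auto simp: cinner_add_right cinner_scaleC_right)

lemma closed_corthogonal_comp: "closed (corthogonal_comp S)"
proof -
  have "corthogonal_comp S = (\<Inter>x\<in>S. {k. cinner x k = 0})"
    by (auto simp: corthogonal_comp_def)
  then show ?thesis
    by (simp add: closed_INT closed_Collect_eq continuous_intros)
qed

lemma nonpos_if_quadratic_bound: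
  fixes r A :: real
  assumes "\<And>t. t > 0 \<Longrightarrow> 2 * t * r \<le> t\<^sup>2 * A" and "A \<ge> 0"
  shows "r \<le> 0"
proof (rule ccontr)
  assume "\<not> r \<le> 0"
  define t where "t = r / (A + 1)"
  have t: "t > 0" using \<open>\<not> r \<le> 0\<close> \<open>A \<ge> 0\<close> by (simp add: t_def)
  with assms(1) have "2 * r \<le> t * A" by (simp add: power2_eq_square mult.assoc)
  also have "t * A < r" using \<open>\<not> r \<le> 0\<close> \<open>A \<ge> 0\<close> by (simp add: t_def field_simps)
  finally show False using \<open>\<not> r \<le> 0\<close> by simp
qed

lemma nearest_point_orthogonal:
  fixes C :: "'a::complex_inner set"
  assumes C: "csubspace C" and c: "c \<in> C"
    and nearest: "\<And>y. y \<in> C \<Longrightarrow> norm (h - c) \<le> norm (h - y)"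
  shows "h - c \<in> corthogonal_comp C"
proof -
  have Re_le: "Re (cinner z (h - c)) \<le> 0" if z: "z \<in> C" for z
  proof (rule nonpos_if_quadratic_bound)
    fix t :: real assume "t > 0"
    have "c + t *\<^sub>R z \<in> C" using C c z by (simp add: csubspace_add csubspace_scaleR)
    then have "norm (h - c) \<le> norm ((h - c) - t *\<^sub>R z)"
      using nearest by (simp add: algebra_simps)
    then have "(norm (h - c))\<^sup>2 \<le> (norm ((h - c) - t *\<^sub>R z))\<^sup>2"
      by (simp add: power_mono)
    then show "2 * t * Re (cinner z (h - c)) \<le> t\<^sup>2 * (norm z)\<^sup>2"
      by (simp add: norm_diff_power2 cinner_scaleR_right Re_cinner_commute[of "h - c"]
          power_mult_distrib)
  qed simp
  show ?thesis
    unfolding corthogonal_comp_def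
  proof (intro CollectI ballI)
    fix x assume x: "x \<in> C"
    have "Re (cinner x (h - c)) = 0"
      using Re_le[OF x] Re_le[OF csubspace_minus[OF C x]] by (simp add: cinner_minus_left)
    moreover have "Im (cinner x (h - c)) = 0"
      using Re_le[OF csubspace_scaleC[OF C x, of \<i>]] Re_le[OF csubspace_scaleC[OF C x, of "- \<i>"]]
      by (simp add: cinner_scaleC_left)
    ultimately show "cinner x (h - c) = 0" by (simp add: complex_eq_iff)
  qed
qed

lemma parallelogram_law:
  "(norm (x + y))\<^sup>2 + (norm (x - y))\<^sup>2 = 2 * (norm (x::'a::complex_inner))\<^sup>2 + 2 * (norm y)\<^sup>2"
  by (simp add: Re_cinner_self[symmetric] cinner_add_left cinner_add_right cinner_diff_left
      cinner_diff_right)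

lemma norm_diff_midpoint:
  fixes h x y :: "'a::complex_inner"
  shows "(norm (x - y))\<^sup>2
    = 2 * (norm (h - x))\<^sup>2 + 2 * (norm (h - y))\<^sup>2 - 4 * (norm (h - (1/2) *\<^sub>R (x + y)))\<^sup>2"
proof -
  have "(h - x) + (h - y) = 2 *\<^sub>R (h - (1/2) *\<^sub>R (x + y))"
    by (simp add: algebra_simps scaleR_2)
  moreover have "(h - x) - (h - y) = y - x" by simp
  ultimately show ?thesis
    using parallelogram_law[of "h - x" "h - y"]
    by (simp add: power_mult_distrib norm_minus_commute[of y x])
qed

lemma minimizing_sequence_Cauchy:
  fixes C :: "'a::complex_inner set"
  assumes C: "csubspace C" and s: "\<And>n. s n \<in> C"
    and lower: "\<And>y. y \<in> C \<Longrightarrow> d \<le> (norm (h - y))\<^sup>2"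
    and lim: "(\<lambda>n. (norm (h - s n))\<^sup>2) \<longlonglongrightarrow> d"
  shows "Cauchy s"
proof (rule metric_CauchyI)
  fix e :: real assume "e > 0"
  then have "d < d + e\<^sup>2 / 4" by simp
  from order_tendstoD(2)[OF lim this] obtain N
    where N: "\<And>n. n \<ge> N \<Longrightarrow> (norm (h - s n))\<^sup>2 < d + e\<^sup>2 / 4"
    by (auto simp: eventually_sequentially)
  show "\<exists>M. \<forall>m\<ge>M. \<forall>n\<ge>M. dist (s m) (s n) < e"
  proof (intro exI allI impI)
    fix m n assume "m \<ge> N" "n \<ge> N"
    have "(1/2) *\<^sub>R (s m + s n) \<in> C"
      using C s by (simp add: csubspace_add csubspace_scaleR)
    then have "(norm (s m - s n))\<^sup>2 < e\<^sup>2"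
      using lower norm_diff_midpoint[of "s m" "s n" h] N[OF \<open>m \<ge> N\<close>] N[OF \<open>n \<ge> N\<close>]
      by fastforce
    then show "dist (s m) (s n) < e"
      using \<open>e > 0\<close> by (simp add: dist_norm power_less_imp_less_base)
  qed
qed

lemma nearest_point_exists:
  fixes C :: "'a::chilbert_space set"
  assumes C: "csubspace C" and "closed C"
  shows "\<exists>c\<in>C. \<forall>y\<in>C. norm (h - c) \<le> norm (h - y)"
proof -
  define f where "f y = (norm (h - y))\<^sup>2" for y
  define d where "d = Inf (f ` C)"
  have bdd: "bdd_below (f ` C)" unfolding f_def by (rule bdd_belowI[of _ 0]) auto
  have lower: "d \<le> f y" if "y \<in> C" for y
    unfolding d_def using that bdd by (simp add: cInf_lower)
  have "d \<in> closure (f ` C)"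
    unfolding d_def using csubspace_zero[OF C] bdd by (intro closure_contains_Inf) auto
  then have "\<exists>t. (\<forall>n. t n \<in> f ` C) \<and> t \<longlonglongrightarrow> d"
    unfolding closure_sequential .
  then obtain t where t: "\<And>n. t n \<in> f ` C" and "t \<longlonglongrightarrow> d"
    by blast
  have "\<forall>n. \<exists>y. y \<in> C \<and> t n = f y" using t by blast
  then obtain s where s: "\<And>n. s n \<in> C" and ts: "\<And>n. t n = f (s n)"
    by metis
  have lim: "(\<lambda>n. f (s n)) \<longlonglongrightarrow> d"
    using \<open>t \<longlonglongrightarrow> d\<close> by (simp add: ts[symmetric])
  have "Cauchy s"
    using minimizing_sequence_Cauchy[OF C s, of d h] lower lim by (simp add: f_def)
  then obtain c where c: "s \<longlonglongrightarrow> c" using Cauchy_convergent convergent_def by blast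
  have "c \<in> C" using closed_sequentially[OF \<open>closed C\<close> s c] .
  have "(\<lambda>n. f (s n)) \<longlonglongrightarrow> f c" unfolding f_def by (intro tendsto_intros c)
  then have "f c = d" using lim by (rule LIMSEQ_unique)
  then have "norm (h - c) \<le> norm (h - y)" if "y \<in> C" for y
    using lower[OF that] unfolding f_def by (metis norm_ge_zero power2_le_imp_le)
  then show ?thesis using \<open>c \<in> C\<close> by blast
qed

lemma orthogonal_projection_exists:
  fixes C :: "'a::chilbert_space set"
  assumes "csubspace C" and "closed C"
  shows "\<exists>c\<in>C. h - c \<in> corthogonal_comp C"
  using nearest_point_exists[OF assms, of h] nearest_point_orthogonal[OF assms(1)] by blast

lemma corthogonal_comp_corthogonal_comp_subset:
  fixes C :: "'a::chilbert_space set"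
  assumes "csubspace C" and "closed C"
  shows "corthogonal_comp (corthogonal_comp C) \<subseteq> C"
proof
  fix r assume r: "r \<in> corthogonal_comp (corthogonal_comp C)"
  obtain p where "p \<in> C" and rp: "r - p \<in> corthogonal_comp C"
    using orthogonal_projection_exists[OF assms] by blast
  have "cinner (r - p) r = 0" using r rp by (simp add: corthogonal_comp_def)
  moreover have "cinner (r - p) p = 0"
    using rp \<open>p \<in> C\<close> cinner_eq_0_commute by (auto simp: corthogonal_comp_def)
  ultimately have "cinner (r - p) (r - p) = 0" by (simp add: cinner_diff_right)
  then show "r \<in> C" using \<open>p \<in> C\<close> by simp
qed

section \<open>Lax--Milgram on a closed subspace\<close>

lemma Cauchy_if_norm_diff_le:
  fixes g :: "nat \<Rightarrow> 'a::real_normed_vector" and s :: "nat \<Rightarrow> 'b::real_normed_vector"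
  assumes "Cauchy s" and "\<mu> > 0" and le: "\<And>m n. \<mu> * norm (g m - g n) \<le> norm (s m - s n)"
  shows "Cauchy g"
proof (rule CauchyI)
  fix e :: real assume "e > 0"
  with \<open>\<mu> > 0\<close> obtain N where N: "\<forall>m\<ge>N. \<forall>n\<ge>N. norm (s m - s n) < e * \<mu>"
    using CauchyD[OF \<open>Cauchy s\<close>, of "e * \<mu>"] by auto
  have "norm (g m - g n) < e" if "m \<ge> N" "n \<ge> N" for m n
  proof -
    have "\<mu> * norm (g m - g n) < \<mu> * e"
      using N le[of m n] that by (metis mult.commute order_le_less_trans)
    with \<open>\<mu> > 0\<close> show ?thesis by simp
  qed
  then show "\<exists>N. \<forall>m\<ge>N. \<forall>n\<ge>N. norm (g m - g n) < e" by blast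
qed

lemma coercive_Re_cinner_nonneg: "coercive M \<Longrightarrow> 0 \<le> Re (cinner (M x) x)"
  unfolding coercive_def by (meson order_trans zero_le_mult_iff zero_le_power2 less_imp_le)

lemma coercive_Re_cinner_nonpos_imp_zero:
  assumes "coercive M" and "Re (cinner (M x) x) \<le> 0"
  shows "x = 0"
proof -
  obtain \<mu> where "\<mu> > 0" and "\<mu> * (norm x)\<^sup>2 \<le> Re (cinner (M x) x)"
    using assms(1) unfolding coercive_def by blast
  with assms(2) have "\<mu> * (norm x)\<^sup>2 \<le> 0" by linarith
  with \<open>\<mu> > 0\<close> show "x = 0" by (simp add: mult_le_0_iff)
qed

lemma coercive_add_corthogonal_lower_bound:
  assumes "coercive M"
  obtains \<mu> where "\<mu> > 0"
    and "\<And>\<gamma> k. \<gamma> \<in> \<Gamma> \<Longrightarrow> k \<in> corthogonal_comp \<Gamma> \<Longrightarrow> \<mu> * norm \<gamma> \<le> norm (M \<gamma> + k)"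
proof -
  obtain \<mu> where "\<mu> > 0" and coer: "\<And>x. \<mu> * (norm x)\<^sup>2 \<le> Re (cinner (M x) x)"
    using assms unfolding coercive_def by blast
  have "\<mu> * norm \<gamma> \<le> norm (M \<gamma> + k)" if "\<gamma> \<in> \<Gamma>" "k \<in> corthogonal_comp \<Gamma>" for \<gamma> k
  proof (cases "\<gamma> = 0")
    case False
    have "cinner k \<gamma> = 0"
      using that cinner_eq_0_commute by (auto simp: corthogonal_comp_def)
    then have "\<mu> * (norm \<gamma>)\<^sup>2 \<le> Re (cinner (M \<gamma> + k) \<gamma>)"
      using coer[of \<gamma>] by (simp add: cinner_add_left)
    also have "\<dots> \<le> norm (M \<gamma> + k) * norm \<gamma>"
      by (rule Re_cinner_le_norm_mult)
    finally show ?thesis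
      using False by (simp add: power2_eq_square mult.assoc mult_le_cancel_right)
  qed simp
  with \<open>\<mu> > 0\<close> show ?thesis using that by blast
qed

lemma csubspace_image_add_corthogonal:
  assumes "csubspace \<Gamma>" and M: "bounded_clinear M"
  shows "csubspace {M \<gamma> + k | \<gamma> k. \<gamma> \<in> \<Gamma> \<and> k \<in> corthogonal_comp \<Gamma>}"
proof -
  interpret M: bounded_linear M using M unfolding bounded_clinear_def by blast
  have MC: "M (c *\<^sub>C x) = c *\<^sub>C M x" for c x using M unfolding bounded_clinear_def by blast
  note \<Gamma> = csubspace_zero[OF \<open>csubspace \<Gamma>\<close>] csubspace_add[OF \<open>csubspace \<Gamma>\<close>]
    csubspace_scaleC[OF \<open>csubspace \<Gamma>\<close>]
  note P = csubspace_zero[OF csubspace_corthogonal_comp] csubspace_add[OF csubspace_corthogonal_comp]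
    csubspace_scaleC[OF csubspace_corthogonal_comp]
  show ?thesis
    unfolding csubspace_def
  proof (intro conjI ballI allI)
    show "0 \<in> {M \<gamma> + k | \<gamma> k. \<gamma> \<in> \<Gamma> \<and> k \<in> corthogonal_comp \<Gamma>}"
      using \<Gamma> P by (auto intro!: exI[of _ 0])
  next
    fix x y assume "x \<in> {M \<gamma> + k | \<gamma> k. \<gamma> \<in> \<Gamma> \<and> k \<in> corthogonal_comp \<Gamma>}"
      "y \<in> {M \<gamma> + k | \<gamma> k. \<gamma> \<in> \<Gamma> \<and> k \<in> corthogonal_comp \<Gamma>}"
    then obtain g1 k1 g2 k2 where "x = M g1 + k1" "y = M g2 + k2" "g1 \<in> \<Gamma>" "g2 \<in> \<Gamma>"
      "k1 \<in> corthogonal_comp \<Gamma>" "k2 \<in> corthogonal_comp \<Gamma>" by blast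
    then show "x + y \<in> {M \<gamma> + k | \<gamma> k. \<gamma> \<in> \<Gamma> \<and> k \<in> corthogonal_comp \<Gamma>}"
      using \<Gamma> P by (intro CollectI exI[of _ "g1 + g2"] exI[of _ "k1 + k2"])
        (simp add: M.add algebra_simps)
  next
    fix c x assume "x \<in> {M \<gamma> + k | \<gamma> k. \<gamma> \<in> \<Gamma> \<and> k \<in> corthogonal_comp \<Gamma>}"
    then obtain g1 k1 where "x = M g1 + k1" "g1 \<in> \<Gamma>" "k1 \<in> corthogonal_comp \<Gamma>" by blast
    then show "c *\<^sub>C x \<in> {M \<gamma> + k | \<gamma> k. \<gamma> \<in> \<Gamma> \<and> k \<in> corthogonal_comp \<Gamma>}"
      using \<Gamma> P by (intro CollectI exI[of _ "c *\<^sub>C g1"] exI[of _ "c *\<^sub>C k1"])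
        (simp add: MC scaleC_add_right)
  qed
qed

lemma closed_image_add_corthogonal:
  fixes \<Gamma> :: "'a::chilbert_space set"
  assumes "csubspace \<Gamma>" and "closed \<Gamma>" and M: "bounded_clinear M" and "coercive M"
  shows "closed {M \<gamma> + k | \<gamma> k. \<gamma> \<in> \<Gamma> \<and> k \<in> corthogonal_comp \<Gamma>}"
  unfolding closed_sequential_limits
proof (intro allI impI, elim conjE)
  interpret M: bounded_linear M using M unfolding bounded_clinear_def by blast
  obtain \<mu> where "\<mu> > 0"
    and bound: "\<And>\<gamma> k. \<gamma> \<in> \<Gamma> \<Longrightarrow> k \<in> corthogonal_comp \<Gamma> \<Longrightarrow> \<mu> * norm \<gamma> \<le> norm (M \<gamma> + k)"
    using coercive_add_corthogonal_lower_bound[OF \<open>coercive M\<close>] by blast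
  fix s l assume "\<forall>n. s n \<in> {M \<gamma> + k | \<gamma> k. \<gamma> \<in> \<Gamma> \<and> k \<in> corthogonal_comp \<Gamma>}" and "s \<longlonglongrightarrow> l"
  then have "\<forall>n. \<exists>\<gamma> k. \<gamma> \<in> \<Gamma> \<and> k \<in> corthogonal_comp \<Gamma> \<and> s n = M \<gamma> + k" by blast
  then obtain g k where g: "\<And>n. g n \<in> \<Gamma>" and k: "\<And>n. k n \<in> corthogonal_comp \<Gamma>"
    and s: "\<And>n. s n = M (g n) + k n"
    by metis
  have "\<mu> * norm (g m - g n) \<le> norm (s m - s n)" for m n
  proof -
    have "s m - s n = M (g m - g n) + (k m - k n)"
      by (simp add: s M.diff algebra_simps)
    then show ?thesis
      using bound csubspace_diff[OF \<open>csubspace \<Gamma>\<close> g g]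
        csubspace_diff[OF csubspace_corthogonal_comp k k] by simp
  qed
  with LIMSEQ_imp_Cauchy[OF \<open>s \<longlonglongrightarrow> l\<close>] \<open>\<mu> > 0\<close> have "Cauchy g"
    by (rule Cauchy_if_norm_diff_le)
  then obtain \<gamma> where "g \<longlonglongrightarrow> \<gamma>" using Cauchy_convergent convergent_def by blast
  have "\<gamma> \<in> \<Gamma>" using closed_sequentially[OF \<open>closed \<Gamma>\<close> g \<open>g \<longlonglongrightarrow> \<gamma>\<close>] .
  have "(\<lambda>n. s n - M (g n)) \<longlonglongrightarrow> l - M \<gamma>"
    by (intro tendsto_diff \<open>s \<longlonglongrightarrow> l\<close> M.tendsto \<open>g \<longlonglongrightarrow> \<gamma>\<close>)
  then have "k \<longlonglongrightarrow> l - M \<gamma>" by (simp add: s)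
  then have "l - M \<gamma> \<in> corthogonal_comp \<Gamma>"
    by (rule closed_sequentially[OF closed_corthogonal_comp k])
  then show "l \<in> {M \<gamma> + k | \<gamma> k. \<gamma> \<in> \<Gamma> \<and> k \<in> corthogonal_comp \<Gamma>}"
    using \<open>\<gamma> \<in> \<Gamma>\<close> by (intro CollectI exI[of _ \<gamma>] exI[of _ "l - M \<gamma>"]) simp
qed

text \<open>\<open>M \<Gamma> + \<Gamma>\<^sup>\<bottom>\<close> is closed and has trivial orthogonal complement, both by coercivity;
  hence it is the whole space.\<close>
lemma lax_milgram_closed_csubspace:
  fixes \<Gamma> :: "'a::chilbert_space set"
  assumes "csubspace \<Gamma>" and "closed \<Gamma>" and "bounded_clinear M" and "coercive M"
  shows "\<exists>\<gamma>\<in>\<Gamma>. h - M \<gamma> \<in> corthogonal_comp \<Gamma>"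
proof -
  define S where "S = {M \<gamma> + k | \<gamma> k. \<gamma> \<in> \<Gamma> \<and> k \<in> corthogonal_comp \<Gamma>}"
  have "r = 0" if r: "r \<in> corthogonal_comp S" for r
  proof -
    have "corthogonal_comp \<Gamma> \<subseteq> S"
      using csubspace_zero[OF \<open>csubspace \<Gamma>\<close>] \<open>bounded_clinear M\<close>
      unfolding S_def bounded_clinear_def by (force intro: linear_simps)
    then have "r \<in> corthogonal_comp (corthogonal_comp \<Gamma>)"
      using r by (auto simp: corthogonal_comp_def)
    then have "r \<in> \<Gamma>"
      using corthogonal_comp_corthogonal_comp_subset[OF \<open>csubspace \<Gamma>\<close> \<open>closed \<Gamma>\<close>] by blast
    then have "M r \<in> S"
      unfolding S_def using csubspace_zero[OF csubspace_corthogonal_comp] by force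
    then have "cinner (M r) r = 0" using r by (simp add: corthogonal_comp_def)
    then show "r = 0"
      using coercive_Re_cinner_nonpos_imp_zero[OF \<open>coercive M\<close>] by simp
  qed
  then have "h \<in> corthogonal_comp (corthogonal_comp S)"
    unfolding corthogonal_comp_def by force
  then have "h \<in> S"
    using corthogonal_comp_corthogonal_comp_subset csubspace_image_add_corthogonal
      closed_image_add_corthogonal assms unfolding S_def by blast
  then show ?thesis unfolding S_def by force
qed

section \<open>Adjoints of densely defined closed operators\<close>

lemma clinear_on_add: "clinear_on S f \<Longrightarrow> x \<in> S \<Longrightarrow> y \<in> S \<Longrightarrow> f (x + y) = f x + f y"
  unfolding clinear_on_def by blast

lemma clinear_on_scaleC: "clinear_on S f \<Longrightarrow> x \<in> S \<Longrightarrow> f (c *\<^sub>C x) = c *\<^sub>C f x"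
  unfolding clinear_on_def by blast

lemma clinear_on_zero: "clinear_on S f \<Longrightarrow> 0 \<in> S \<Longrightarrow> f 0 = 0"
  by (metis clinear_on_scaleC scaleC_zero_left)

lemma clinear_on_diff:
  assumes f: "clinear_on S f" and S: "csubspace S" and "x \<in> S" "y \<in> S"
  shows "f (x - y) = f x - f y"
proof -
  have "f (- y) = - f y"
    using clinear_on_scaleC[OF f \<open>y \<in> S\<close>, of "-1"] by (simp add: scaleC_minus1_left)
  then show ?thesis
    using clinear_on_add[OF f \<open>x \<in> S\<close> csubspace_minus[OF S \<open>y \<in> S\<close>]] by simp
qed

lemma clinear_on_subset: "clinear_on S f \<Longrightarrow> T \<subseteq> S \<Longrightarrow> clinear_on T f"
  unfolding clinear_on_def by blast

lemma csubspace_graph: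
  assumes "csubspace S" and "clinear_on S f"
  shows "csubspace {(x, f x) | x. x \<in> S}"
  unfolding csubspace_def
proof (intro conjI ballI allI)
  show "0 \<in> {(x, f x) | x. x \<in> S}"
    using assms clinear_on_zero csubspace_zero by (fastforce simp: zero_prod_def)
next
  fix p q assume "p \<in> {(x, f x) | x. x \<in> S}" "q \<in> {(x, f x) | x. x \<in> S}"
  then show "p + q \<in> {(x, f x) | x. x \<in> S}"
    using assms by (auto simp: clinear_on_add csubspace_add)
next
  fix c p assume "p \<in> {(x, f x) | x. x \<in> S}"
  then show "c *\<^sub>C p \<in> {(x, f x) | x. x \<in> S}"
    using assms by (auto simp: clinear_on_scaleC csubspace_scaleC)
qed

lemma cinner_dense_eq:
  fixes w1 w2 :: "'a::complex_inner"
  assumes "closure S = UNIV" and eq: "\<And>x. x \<in> S \<Longrightarrow> cinner x w1 = cinner x w2"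
  shows "w1 = w2"
proof -
  have "cinner (w1 - w2) x = 0" if "x \<in> S" for x
    using eq[OF that] cinner_eq_0_commute[of x "w1 - w2"] by (simp add: cinner_diff_right)
  then have "S \<subseteq> corthogonal_comp {w1 - w2}"
    by (auto simp: corthogonal_comp_def)
  then have "closure S \<subseteq> corthogonal_comp {w1 - w2}"
    by (rule closure_minimal[OF _ closed_corthogonal_comp])
  then have "w1 - w2 \<in> corthogonal_comp {w1 - w2}"
    using \<open>closure S = UNIV\<close> by blast
  then show ?thesis by (simp add: corthogonal_comp_def)
qed

lemma cinner_adj:
  assumes S: "closure S = UNIV" and "v \<in> adj_dom S f" and "u \<in> S"
  shows "cinner (f u) v = cinner u (adj S f v)"
proof -
  obtain w where w: "\<forall>u\<in>S. cinner (f u) v = cinner u w"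
    using \<open>v \<in> adj_dom S f\<close> unfolding adj_dom_def by blast
  have "\<forall>u\<in>S. cinner (f u) v = cinner u (adj S f v)"
    unfolding adj_def
  proof (rule theI[of _ w])
    fix w' assume "\<forall>u\<in>S. cinner (f u) v = cinner u w'"
    then show "w' = w" using w by (intro cinner_dense_eq[OF S]) auto
  qed (rule w)
  then show ?thesis using \<open>u \<in> S\<close> by blast
qed

lemma adj_domI: "(\<And>u. u \<in> S \<Longrightarrow> cinner (f u) v = cinner u w) \<Longrightarrow> v \<in> adj_dom S f"
  unfolding adj_dom_def by blast

lemma adj_eqI:
  assumes S: "closure S = UNIV" and w: "\<And>u. u \<in> S \<Longrightarrow> cinner (f u) v = cinner u w"
  shows "adj S f v = w"
proof (rule cinner_dense_eq[OF S])
  fix u assume "u \<in> S"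
  then show "cinner u (adj S f v) = cinner u w"
    using cinner_adj[OF S adj_domI[of S f v w, OF w]] w by simp
qed

lemma csubspace_adj_dom: "csubspace (adj_dom S f)"
  unfolding csubspace_def
proof (intro conjI ballI allI)
  show "0 \<in> adj_dom S f" by (rule adj_domI[of _ _ _ 0]) simp
next
  fix x y assume "x \<in> adj_dom S f" "y \<in> adj_dom S f"
  then obtain wx wy where "\<forall>u\<in>S. cinner (f u) x = cinner u wx" "\<forall>u\<in>S. cinner (f u) y = cinner u wy"
    unfolding adj_dom_def by blast
  then show "x + y \<in> adj_dom S f"
    by (intro adj_domI[of _ _ _ "wx + wy"]) (simp add: cinner_add_right)
next
  fix c x assume "x \<in> adj_dom S f"
  then obtain wx where "\<forall>u\<in>S. cinner (f u) x = cinner u wx"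
    unfolding adj_dom_def by blast
  then show "c *\<^sub>C x \<in> adj_dom S f"
    by (intro adj_domI[of _ _ _ "c *\<^sub>C wx"]) (simp add: cinner_scaleC_right)
qed

text \<open>\<open>f\<^sup>*\<^sup>* \<subseteq> f\<close>: the part \<open>(q\<^sub>0, q\<^sub>1)\<close> of \<open>(y, w)\<close> orthogonal to the graph satisfies
  \<open>q\<^sub>1 \<in> dom f\<^sup>*\<close> with \<open>f\<^sup>* q\<^sub>1 = - q\<^sub>0\<close>, so the hypothesis gives \<open>- \<parallel>q\<^sub>0\<parallel>\<^sup>2 = \<parallel>q\<^sub>1\<parallel>\<^sup>2\<close>.\<close>
lemma densely_defined_closed_adj_adj:
  fixes S :: "'a::chilbert_space set" and f :: "'a \<Rightarrow> 'b::chilbert_space"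
  assumes "densely_defined_closed S f"
    and yw: "\<And>v. v \<in> adj_dom S f \<Longrightarrow> cinner (adj S f v) y = cinner v w"
  shows "y \<in> S \<and> f y = w"
proof -
  have S: "csubspace S" "clinear_on S f" "closure S = UNIV" "closed {(x, f x) | x. x \<in> S}"
    using assms(1) unfolding densely_defined_closed_def by auto
  obtain p where p: "p \<in> S" and orth: "(y, w) - (p, f p) \<in> corthogonal_comp {(x, f x) | x. x \<in> S}"
    using orthogonal_projection_exists[OF csubspace_graph[OF S(1,2)] S(4)] by blast
  define q0 q1 where "q0 = y - p" and "q1 = w - f p"
  have "cinner (f x) q1 = cinner x (- q0)" if "x \<in> S" for x
    using orth that
    by (auto simp: corthogonal_comp_def q0_def q1_def cinner_diff_right add_eq_0_iff add.commute)
  then have q1: "q1 \<in> adj_dom S f" "adj S f q1 = - q0"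
    using adj_domI adj_eqI[OF S(3)] by blast+
  have "cinner (adj S f q1) p = cinner q1 (f p)"
    using cinner_adj[OF S(3) q1(1) p] by (metis cinner_commute)
  then have "cinner (adj S f q1) q0 = cinner q1 q1"
    using yw[OF q1(1)] by (simp add: q0_def q1_def cinner_diff_right)
  then have "Re (cinner (adj S f q1) q0) = Re (cinner q1 q1)" by simp
  then have "- (norm q0)\<^sup>2 = (norm q1)\<^sup>2"
    using q1(2) by (simp add: cinner_minus_left Re_cinner_self)
  then have "(norm q0)\<^sup>2 = 0" "(norm q1)\<^sup>2 = 0"
    using zero_le_power2[of "norm q0"] zero_le_power2[of "norm q1"] by linarith+
  then have "q0 = 0" "q1 = 0" by simp_all
  then show ?thesis using p by (simp add: q0_def q1_def)
qed

lemma bounded_clinear_map_prod: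
  assumes "bounded_clinear m" and "bounded_clinear a"
  shows "bounded_clinear (map_prod m a)"
proof -
  have "map_prod m a = (\<lambda>p. (m (fst p), a (snd p)))"
    by (simp add: fun_eq_iff map_prod_def split_beta)
  moreover have "bounded_linear (\<lambda>p. (m (fst p), a (snd p)))"
    using assms unfolding bounded_clinear_def
    by (intro bounded_linear_Pair bounded_linear_compose[OF _ bounded_linear_fst]
        bounded_linear_compose[OF _ bounded_linear_snd]) auto
  ultimately show ?thesis
    using assms unfolding bounded_clinear_def by (simp add: scaleC_prod_def)
qed

lemma coercive_map_prod:
  assumes "coercive m" and "coercive a"
  shows "coercive (map_prod m a)"
proof -
  obtain \<mu>m \<mu>a where "\<mu>m > 0" "\<mu>a > 0"
    and m: "\<And>x. \<mu>m * (norm x)\<^sup>2 \<le> Re (cinner (m x) x)"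
    and a: "\<And>y. \<mu>a * (norm y)\<^sup>2 \<le> Re (cinner (a y) y)"
    using assms unfolding coercive_def by blast
  have "min \<mu>m \<mu>a * (norm p)\<^sup>2 \<le> Re (cinner (map_prod m a p) p)" for p
  proof -
    have "min \<mu>m \<mu>a * (norm p)\<^sup>2 = min \<mu>m \<mu>a * (norm (fst p))\<^sup>2 + min \<mu>m \<mu>a * (norm (snd p))\<^sup>2"
      by (simp add: norm_prod_def distrib_left)
    also have "\<dots> \<le> \<mu>m * (norm (fst p))\<^sup>2 + \<mu>a * (norm (snd p))\<^sup>2"
      by (intro add_mono mult_right_mono) auto
    also have "\<dots> \<le> Re (cinner (map_prod m a p) p)"
      using m[of "fst p"] a[of "snd p"] by (simp add: map_prod_def split_beta cinner_prod_def)
    finally show ?thesis .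
  qed
  then show ?thesis
    unfolding coercive_def using \<open>\<mu>m > 0\<close> \<open>\<mu>a > 0\<close> by (intro exI[of _ "min \<mu>m \<mu>a"]) auto
qed

section \<open>The boundary value problem for \<open>m - D a G\<close>\<close>

locale closed_operator_pair =
  fixes SG :: "'h0::chilbert_space set" and G :: "'h0 \<Rightarrow> 'h1::chilbert_space"
    and SD :: "'h1 set" and D :: "'h1 \<Rightarrow> 'h0"
  assumes G: "densely_defined_closed SG G"
    and D: "densely_defined_closed SD D"
    and D_extends_neg_adj_G: "neg_adj_subset SG G SD D"
begin

lemma csubspace_SG: "csubspace SG" and clinear_on_G: "clinear_on SG G"
  using G unfolding densely_defined_closed_def by auto

lemma csubspace_SD: "csubspace SD" and clinear_on_D: "clinear_on SD D"
  and dense_SD: "closure SD = UNIV"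
  using D unfolding densely_defined_closed_def by auto

lemma G_ring_restricts_G:
  assumes "z \<in> dom_ring SD D"
  shows "z \<in> SG \<and> G z = - adj SD D z"
proof (rule densely_defined_closed_adj_adj[OF G])
  fix v assume "v \<in> adj_dom SG G"
  then have "v \<in> SD" and "D v = - adj SG G v"
    using D_extends_neg_adj_G unfolding neg_adj_subset_def by auto
  then show "cinner (adj SG G v) z = cinner v (- adj SD D z)"
    using cinner_adj[OF dense_SD assms[unfolded dom_ring_def] \<open>v \<in> SD\<close>]
    by (simp add: cinner_minus_left cinner_minus_right) (metis minus_minus)
qed

lemma graph_G_ring_eq:
  "{(z, G z) | z. z \<in> dom_ring SD D} = {p. \<forall>u\<in>SD. cinner (D u) (fst p) + cinner u (snd p) = 0}"
proof (intro equalityI subsetI)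
  fix p assume "p \<in> {(z, G z) | z. z \<in> dom_ring SD D}"
  then show "p \<in> {p. \<forall>u\<in>SD. cinner (D u) (fst p) + cinner u (snd p) = 0}"
    using G_ring_restricts_G cinner_adj[OF dense_SD]
    by (auto simp: dom_ring_def cinner_minus_right)
next
  fix p assume "p \<in> {p. \<forall>u\<in>SD. cinner (D u) (fst p) + cinner u (snd p) = 0}"
  then have "cinner (D u) (fst p) = cinner u (- snd p)" if "u \<in> SD" for u
    using that by (simp add: cinner_minus_right eq_neg_iff_add_eq_0)
  then have "fst p \<in> dom_ring SD D" and "adj SD D (fst p) = - snd p"
    unfolding dom_ring_def using adj_domI adj_eqI[OF dense_SD] by blast+
  then show "p \<in> {(z, G z) | z. z \<in> dom_ring SD D}"
    using G_ring_restricts_G by (intro CollectI exI[of _ "fst p"]) (simp add: prod_eq_iff)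
qed

lemma closed_graph_G_ring: "closed {(z, G z) | z. z \<in> dom_ring SD D}"
proof -
  have "{p. \<forall>u\<in>SD. cinner (D u) (fst p) + cinner u (snd p) = 0}
      = (\<Inter>u\<in>SD. {p. cinner (D u) (fst p) + cinner u (snd p) = 0})"
    by auto
  then show ?thesis
    unfolding graph_G_ring_eq by (simp add: closed_INT closed_Collect_eq continuous_intros)
qed

lemma csubspace_graph_G_ring: "csubspace {(z, G z) | z. z \<in> dom_ring SD D}"
  using G_ring_restricts_G
  by (intro csubspace_graph csubspace_adj_dom[folded dom_ring_def] clinear_on_subset[OF clinear_on_G])
    blast

text \<open>Orthogonality of \<open>(m u, a (G u))\<close> to the graph of \<open>G\<^sup>\<circ> = -D\<^sup>*\<close> says that \<open>a (G u)\<close> lies in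
  the domain of \<open>D\<^sup>*\<^sup>* = D\<close>, with image \<open>m u\<close>.\<close>
lemma D_a_G_eq_if_corthogonal:
  assumes "(m u, a (G u)) \<in> corthogonal_comp {(z, G z) | z. z \<in> dom_ring SD D}"
  shows "a (G u) \<in> SD \<and> D (a (G u)) = m u"
proof (rule densely_defined_closed_adj_adj[OF D])
  fix z assume z: "z \<in> adj_dom SD D"
  then have "cinner z (m u) + cinner (G z) (a (G u)) = 0"
    using assms unfolding corthogonal_comp_def dom_ring_def by force
  then show "cinner (adj SD D z) (a (G u)) = cinner z (m u)"
    using G_ring_restricts_G z by (simp add: dom_ring_def cinner_minus_left add_eq_0_iff)
qed

lemma solution_exists:
  assumes a: "bounded_clinear a" "coercive a" and m: "bounded_clinear m" "coercive m"
    and "u0 \<in> SG"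
  shows "\<exists>u. u \<in> dom_DaG SG G a SD \<and> m u - D (a (G u)) = 0 \<and> u - u0 \<in> dom_ring SD D"
proof -
  let ?\<Gamma> = "{(z, G z) | z. z \<in> dom_ring SD D}" and ?M = "map_prod m a"
  interpret M: bounded_linear ?M
    using bounded_clinear_map_prod[OF m(1) a(1)] unfolding bounded_clinear_def by blast
  obtain \<gamma> where "\<gamma> \<in> ?\<Gamma>" and \<gamma>: "- ?M (u0, G u0) - ?M \<gamma> \<in> corthogonal_comp ?\<Gamma>"
    using lax_milgram_closed_csubspace[OF csubspace_graph_G_ring closed_graph_G_ring
        bounded_clinear_map_prod[OF m(1) a(1)] coercive_map_prod[OF m(2) a(2)]] by blast
  then obtain w where w: "w \<in> dom_ring SD D" and "\<gamma> = (w, G w)" by blast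
  define u where "u = u0 + w"
  have "w \<in> SG" using G_ring_restricts_G[OF w] by blast
  then have "u \<in> SG" and "G u = G u0 + G w"
    using csubspace_add[OF csubspace_SG] clinear_on_add[OF clinear_on_G] \<open>u0 \<in> SG\<close>
    by (simp_all add: u_def)
  then have "- ?M (u0, G u0) - ?M \<gamma> = - (m u, a (G u))"
    using M.add[of "(u0, G u0)" "(w, G w)"] by (simp add: \<open>\<gamma> = (w, G w)\<close> u_def)
  with \<gamma> have "(m u, a (G u)) \<in> corthogonal_comp ?\<Gamma>"
    using csubspace_minus[OF csubspace_corthogonal_comp] by fastforce
  then have "a (G u) \<in> SD \<and> D (a (G u)) = m u" by (rule D_a_G_eq_if_corthogonal)
  then show ?thesis
    using \<open>u \<in> SG\<close> w by (intro exI[of _ u]) (simp add: dom_DaG_def u_def)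
qed

lemma homogeneous_solution_eq_0:
  assumes "coercive a" and "coercive m"
    and z: "z \<in> dom_ring SD D" and "a (G z) \<in> SD" and "D (a (G z)) = m z"
  shows "z = 0"
proof -
  have "cinner (m z) z = cinner (a (G z)) (adj SD D z)"
    using cinner_adj[OF dense_SD z[unfolded dom_ring_def] \<open>a (G z) \<in> SD\<close>] \<open>D (a (G z)) = m z\<close>
    by simp
  also have "\<dots> = - cinner (a (G z)) (G z)"
    using G_ring_restricts_G[OF z] by (simp add: cinner_minus_right)
  finally have "Re (cinner (m z) z) \<le> 0"
    using coercive_Re_cinner_nonneg[OF \<open>coercive a\<close>, of "G z"] by simp
  then show "z = 0" by (rule coercive_Re_cinner_nonpos_imp_zero[OF \<open>coercive m\<close>])
qed

lemma solution_unique: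
  assumes "bounded_clinear a" "coercive a" "bounded_clinear m" "coercive m"
    and u: "u \<in> dom_DaG SG G a SD" "m u - D (a (G u)) = 0" "u - u0 \<in> dom_ring SD D"
    and y: "y \<in> dom_DaG SG G a SD" "m y - D (a (G y)) = 0" "y - u0 \<in> dom_ring SD D"
  shows "y = u"
proof -
  interpret a: bounded_linear a using \<open>bounded_clinear a\<close> unfolding bounded_clinear_def by blast
  interpret m: bounded_linear m using \<open>bounded_clinear m\<close> unfolding bounded_clinear_def by blast
  have "u \<in> SG" "a (G u) \<in> SD" "y \<in> SG" "a (G y) \<in> SD"
    using u(1) y(1) by (simp_all add: dom_DaG_def)
  have "y - u = (y - u0) - (u - u0)" by simp
  then have "y - u \<in> dom_ring SD D"
    using csubspace_diff[OF csubspace_adj_dom] u(3) y(3) by (metis dom_ring_def)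
  moreover have aG: "a (G (y - u)) = a (G y) - a (G u)"
    using clinear_on_diff[OF clinear_on_G csubspace_SG \<open>y \<in> SG\<close> \<open>u \<in> SG\<close>] by (simp add: a.diff)
  moreover have "a (G (y - u)) \<in> SD"
    unfolding aG by (rule csubspace_diff[OF csubspace_SD \<open>a (G y) \<in> SD\<close> \<open>a (G u) \<in> SD\<close>])
  moreover have "D (a (G (y - u))) = m (y - u)"
    unfolding aG clinear_on_diff[OF clinear_on_D csubspace_SD \<open>a (G y) \<in> SD\<close> \<open>a (G u) \<in> SD\<close>]
    using u(2) y(2) by (simp add: m.diff)
  ultimately have "y - u = 0"
    using homogeneous_solution_eq_0 \<open>coercive a\<close> \<open>coercive m\<close> by blast
  then show ?thesis by simp
qed

end

theorem proposition2p11: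
  fixes SG :: "'h0::chilbert_space set" and G :: "'h0 \<Rightarrow> 'h1::chilbert_space"
    and SD :: "'h1 set" and D :: "'h1 \<Rightarrow> 'h0"
    and a :: "'h1 \<Rightarrow> 'h1" and m :: "'h0 \<Rightarrow> 'h0" and u0 :: 'h0
  assumes "densely_defined_closed SG G"
    and "densely_defined_closed SD D"
    and "neg_adj_subset SG G SD D"
    and "bounded_clinear a" and "coercive a"
    and "bounded_clinear m" and "coercive m"
    and "u0 \<in> BD SG G SD D"
  shows "\<exists>!u. u \<in> dom_DaG SG G a SD \<and> m u - D (a (G u)) = 0 \<and> u - u0 \<in> dom_ring SD D"
proof -
  interpret closed_operator_pair SG G SD D
    using assms(1-3) by unfold_locales
  have "u0 \<in> SG" using assms(8) by (simp add: BD_def)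
  then show ?thesis
    using solution_exists[OF assms(4-7)] solution_unique[OF assms(4-7)] by metis
qed

end
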